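(* Let $k\ge3$ and let $u\in I_k$ be a renewed vertex. Then for every $n\ge1$ and every $v\in I^u_n$: (i) $\sigma(v)\subseteq\tilde I^u_n$; (ii) $\alpha_i(v)\subseteq I^u_{n-i}$ for each $0\le i\le n$. Moreover, $I^u_n\subseteq\mathcal U^u_n$ for every $n\ge0$, and for every $m\ge k$, every $v\in V^u_{m-k}$ and every $v'\in V_m\setminus V^u_{m-k}$, any path in $G_m$ from $v$ to $v'$ passes through $u$.
   Context: Ulam–Harris labels: $\mathcal U_n=\mathbb N^n$ ($n\ge0$, $\mathcal U_0=\{\emptyset\}$), $\mathcal U=\bigcup_{n\ge0}\mathcal U_n$; for $u=u_1\dots u_k$, $v=v_1\dots v_l$ write $uv=u_1\dots u_kv_1\dots v_l$. Fix $p>-1$, $q\in[0,1]$, and let $(\xi_u)_{u\in\mathcal U}$ be i.i.d. Poisson with mean $1+p$, and $(\delta_{u,v})_{u,v\in\mathcal U}$, $(\mu_{\{u,v\}})_{u\ne v\in\mathcal U}$ i.i.d. Bernoulli with mean $q$, all independent. The process $\mathcal G(p,q)=(G_n)_{n\ge0}$, $G_n=(V_n,E_n)$: $G_0=(\{\emptyset\},\emptyset)$, and $I_m=V_m\cap\mathcal U_m$. Given $G_{n-1}$ ($n\ge1$): (1) for $u\in I_{n-1}$ let $\mathcal K_u=\{v\in V_{n-1}:d_{G_{n-1}}(u,v)=3\}$ and $\mathcal C_u=\{j\in\mathbb N:j\le\xi_u,\ \delta_{v,uj}=0\ \forall v\in\mathcal K_u\}$; let $\tilde G_n$ have vertex set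 $V_{n-1}\cup\{ui:u\in I_{n-1},i\in\mathcal C_u\}$ and edge set $E_{n-1}\cup\{\{u,ui\}:u\in I_{n-1},i\in\mathcal C_u\}$, and $\tilde I_n$ its set of vertices in $\mathcal U_n$. (2) For $u,v\in\tilde I_n$ write $u\overset{m}{\sim}v$ iff $d_{\tilde G_n}(u,v)=4$ and $\mu_{\{u,v\}}=1$; let $\sim$ be the equivalence relation on $\tilde I_n$ generated by $\overset m\sim$, and $\pi(u)$ the lexicographically smallest element of the class of $u$. Then $V_n=V_{n-1}\cup\{\pi(u):u\in\tilde I_n\}$, $E_n=E_{n-1}\cup\{\{v,\pi(vi)\}:v\in I_{n-1},i\in\mathcal C_v\}$. Notation: for $w\in I_n$, $\alpha(w)=\bigcup_{0\le j\le n}\{x\in I_{n-j}:d_{G_n}(x,w)=j\}$ and $\alpha_i(w)=\alpha(w)\cap I_{n-i}$ for $i\le n$. For $v\in I_n$, $\sigma(v)=\{\tilde v\in\tilde I_n:\tilde v\sim v\}$. A vertex $v\in I_n$ ($n\ge3$) is renewed if exactly three vertices $w\in V_n$ satisfy $1\le d_{G_n}(v,w)\le3$. For $u\in I_k$ and $n\ge0$: $I^u_n=\{v\in I_{k+n}:u\in\alpha(v)\}$, $V^u_n=\bigcup_{j\le n}I^u_j$, $\mathcal U^u_n=\{uv:v\in\mathcal U_n\}$, and for $n\ge1$, $\tilde I^u_n=\{wi:w\in I^u_{n-1},\ wi\in\tilde I_{k+n}\}$. *)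

theory Defs
  imports Main "HOL-Library.Extended_Nat" "HOL-Library.List_Lexorder"
begin

text \<open>Ulam-Harris labels are lists of positive naturals; a graph is a pair
 (vertex set, edge set), edges being two-element sets.
 A realization of the randomness is given by
   xi :: label => nat             (the Poisson variables xi_u),
   de :: label => label => bool   (the Bernoulli variables delta_{u,v}),
   mu :: label set => bool        (the Bernoulli variables mu_{u,v}, indexed by unordered pairs).\<close>

type_synonym label = "nat list"
type_synonym graph = "label set \<times> label set set"

definition ulam :: "nat \<Rightarrow> label set" where
  "ulam n = {v. length v = n \<and> (\<forall>x\<in>set v. 1 \<le> x)}"

definition walk :: "graph \<Rightarrow> label list \<Rightarrow> bool" where
  "walk G xs \<longleftrightarrow> xs \<noteq> [] \<and> set xs \<subseteq> fst G \<and>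
     (\<forall>i. Suc i < length xs \<longrightarrow> {xs ! i, xs ! Suc i} \<in> snd G)"

definition gpath :: "graph \<Rightarrow> label list \<Rightarrow> bool" where
  "gpath G xs \<longleftrightarrow> walk G xs \<and> distinct xs"

text \<open>Graph distance (infinite if no path).\<close>
definition gdist :: "graph \<Rightarrow> label \<Rightarrow> label \<Rightarrow> enat" where
  "gdist G a b = (INF xs \<in> {xs. walk G xs \<and> hd xs = a \<and> last xs = b}. enat (length xs - 1))"

definition lvl :: "graph \<Rightarrow> nat \<Rightarrow> label set" where
  "lvl G m = {u \<in> fst G. u \<in> ulam m}"

definition Kset :: "graph \<Rightarrow> label \<Rightarrow> label set" where
  "Kset G u = {v \<in> fst G. gdist G u v = 3}"

definition Cset :: "(label \<Rightarrow> nat) \<Rightarrow> (label \<Rightarrow> label \<Rightarrow> bool) \<Rightarrow> graph \<Rightarrow> label \<Rightarrow> nat set" where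
  "Cset xi de G u = {j. 1 \<le> j \<and> j \<le> xi u \<and> (\<forall>v\<in>Kset G u. \<not> de v (u @ [j]))}"

definition tG :: "(label \<Rightarrow> nat) \<Rightarrow> (label \<Rightarrow> label \<Rightarrow> bool) \<Rightarrow> graph \<Rightarrow> nat \<Rightarrow> graph" where
  "tG xi de G m =
     (fst G \<union> {u @ [i] | u i. u \<in> lvl G m \<and> i \<in> Cset xi de G u},
      snd G \<union> {{u, u @ [i]} | u i. u \<in> lvl G m \<and> i \<in> Cset xi de G u})"

definition tI :: "(label \<Rightarrow> nat) \<Rightarrow> (label \<Rightarrow> label \<Rightarrow> bool) \<Rightarrow> graph \<Rightarrow> nat \<Rightarrow> label set" where
  "tI xi de G m = lvl (tG xi de G m) (Suc m)"

definition msim :: "(label \<Rightarrow> nat) \<Rightarrow> (label \<Rightarrow> label \<Rightarrow> bool) \<Rightarrow> (label set \<Rightarrow> bool)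
    \<Rightarrow> graph \<Rightarrow> nat \<Rightarrow> label \<Rightarrow> label \<Rightarrow> bool" where
  "msim xi de mu G m a b \<longleftrightarrow> a \<in> tI xi de G m \<and> b \<in> tI xi de G m \<and>
     gdist (tG xi de G m) a b = 4 \<and> mu {a, b}"

definition simrel :: "(label \<Rightarrow> nat) \<Rightarrow> (label \<Rightarrow> label \<Rightarrow> bool) \<Rightarrow> (label set \<Rightarrow> bool)
    \<Rightarrow> graph \<Rightarrow> nat \<Rightarrow> label \<Rightarrow> label \<Rightarrow> bool" where
  "simrel xi de mu G m a b \<longleftrightarrow> a \<in> tI xi de G m \<and> b \<in> tI xi de G m \<and>
     (\<lambda>x y. msim xi de mu G m x y \<or> msim xi de mu G m y x)\<^sup>*\<^sup>* a b"

definition piF :: "(label \<Rightarrow> nat) \<Rightarrow> (label \<Rightarrow> label \<Rightarrow> bool) \<Rightarrow> (label set \<Rightarrow> bool)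
    \<Rightarrow> graph \<Rightarrow> nat \<Rightarrow> label \<Rightarrow> label" where
  "piF xi de mu G m a = Min {b. simrel xi de mu G m a b}"

definition step :: "(label \<Rightarrow> nat) \<Rightarrow> (label \<Rightarrow> label \<Rightarrow> bool) \<Rightarrow> (label set \<Rightarrow> bool)
    \<Rightarrow> nat \<Rightarrow> graph \<Rightarrow> graph" where
  "step xi de mu m G =
     (fst G \<union> piF xi de mu G m ` tI xi de G m,
      snd G \<union> {{v, piF xi de mu G m (v @ [i])} | v i. v \<in> lvl G m \<and> i \<in> Cset xi de G v})"

primrec GG :: "(label \<Rightarrow> nat) \<Rightarrow> (label \<Rightarrow> label \<Rightarrow> bool) \<Rightarrow> (label set \<Rightarrow> bool) \<Rightarrow> nat \<Rightarrow> graph" where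
  "GG xi de mu 0 = ({[]}, {})"
| "GG xi de mu (Suc m) = step xi de mu m (GG xi de mu m)"

text \<open>Stage-level notions.  V n, E n, I n refer to G_n; tildeI n and simn n
  (for n >= 1) are tilde I_n and the relation ~ on it.\<close>

definition Vn where "Vn xi de mu n = fst (GG xi de mu n)"
definition In where "In xi de mu n = lvl (GG xi de mu n) n"
definition tildeI where "tildeI xi de mu n = tI xi de (GG xi de mu (n - 1)) (n - 1)"
definition simn where "simn xi de mu n = simrel xi de mu (GG xi de mu (n - 1)) (n - 1)"

definition alpha :: "(label \<Rightarrow> nat) \<Rightarrow> (label \<Rightarrow> label \<Rightarrow> bool) \<Rightarrow> (label set \<Rightarrow> bool)
    \<Rightarrow> nat \<Rightarrow> label \<Rightarrow> label set" where
  "alpha xi de mu n w =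
     (\<Union>j\<in>{0..n}. {x \<in> In xi de mu (n - j). gdist (GG xi de mu n) x w = enat j})"

definition alpha_i where
  "alpha_i xi de mu n i w = alpha xi de mu n w \<inter> In xi de mu (n - i)"

definition sigma where
  "sigma xi de mu n v = {vt \<in> tildeI xi de mu n. simn xi de mu n vt v}"

definition renewed where
  "renewed xi de mu n v \<longleftrightarrow> 3 \<le> n \<and> v \<in> In xi de mu n \<and>
     card {w \<in> Vn xi de mu n. 1 \<le> gdist (GG xi de mu n) v w \<and> gdist (GG xi de mu n) v w \<le> 3} = 3"

definition Iu where
  "Iu xi de mu k u n = {v \<in> In xi de mu (k + n). u \<in> alpha xi de mu (k + n) v}"

definition Vu where
  "Vu xi de mu k u n = (\<Union>j\<in>{0..n}. Iu xi de mu k u j)"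

definition Uu :: "label \<Rightarrow> nat \<Rightarrow> label set" where
  "Uu u n = {u @ v | v. v \<in> ulam n}"

definition tIu where
  "tIu xi de mu k u n = {w @ [i] | w i. w \<in> Iu xi de mu k u (n - 1) \<and> w @ [i] \<in> tildeI xi de mu (k + n)}"

end

theory Submission
  imports Defs "HOL-Library.Sublist"
begin

text \<open>Call D the set of labels extending u, and the length of a label its level. Renewal of u
  means that the only vertices within distance 3 of u in G_k are its three ancestors; hence in G_k
  the edge {u, p} to the parent p is the only edge between D and its complement, and u is the
  only vertex of level k adjacent to p. This persists in every G_m with m \<ge> k: new edges join a
  vertex to the representative of one of its children, and merging never identifies labels on
  different sides of the cut, because a walk of length 4 between two new vertices on different
  sides would pass through p, which lies on level k - 1, hence through level-k neighbours of p,
  that is through u, and this puts both ends into D. So every walk leaving D passes through u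
  and p, and since p lies on level k - 1, a vertex of level k + n is at distance n from u exactly
  when it lies in D.\<close>

lemma walk_singleton [simp]: "walk G [x] \<longleftrightarrow> x \<in> fst G"
  by (simp add: walk_def)

lemma walk_Cons_Cons [simp]:
  "walk G (x # y # zs) \<longleftrightarrow> x \<in> fst G \<and> {x, y} \<in> snd G \<and> walk G (y # zs)"
  unfolding walk_def by (auto simp: All_less_Suc2)

lemma walk_snoc:
  assumes "walk G xs" "{last xs, x} \<in> snd G" "x \<in> fst G"
  shows "walk G (xs @ [x])"
  using assms by (induction xs rule: induct_list012) auto

lemma gdist_le_walk: "walk G xs \<Longrightarrow> gdist G (hd xs) (last xs) \<le> enat (length xs - 1)"
  unfolding gdist_def by (rule INF_lower) auto

lemma gdist_greatest:
  "(\<And>xs. walk G xs \<Longrightarrow> hd xs = a \<Longrightarrow> last xs = b \<Longrightarrow> c \<le> enat (length xs - 1)) \<Longrightarrow> c \<le> gdist G a b"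
  unfolding gdist_def by (rule INF_greatest) auto

lemma gdist_ge_1: "a \<noteq> b \<Longrightarrow> 1 \<le> gdist G a b"
proof (rule gdist_greatest)
  fix xs assume "a \<noteq> b" "walk G xs" "hd xs = a" "last xs = b"
  then have "length xs \<noteq> 0" "length xs \<noteq> 1"
    by (auto simp: walk_def length_Suc_conv)
  then have "1 \<le> length xs - 1"
    by linarith
  then show "1 \<le> enat (length xs - 1)"
    by (simp add: one_enat_def)
qed

lemma gdist_obtains_walk:
  assumes "gdist G a b = enat j"
  obtains xs where "walk G xs" "hd xs = a" "last xs = b" "length xs = Suc j"
proof -
  let ?W = "{xs. walk G xs \<and> hd xs = a \<and> last xs = b}"
  have "?W \<noteq> {}"
    using assms unfolding gdist_def by (metis INF_empty top_enat_def enat.distinct(1))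
  then have "gdist G a b \<in> (\<lambda>xs. enat (length xs - 1)) ` ?W"
    unfolding gdist_def by (auto intro: wellorder_InfI)
  then obtain xs where "xs \<in> ?W" "enat (length xs - 1) = enat j"
    using assms by auto
  moreover from this have "xs \<noteq> []"
    by (simp add: walk_def)
  ultimately show ?thesis
    using that by auto
qed

definition levelled :: "graph \<Rightarrow> bool" where
  "levelled G \<longleftrightarrow>
     (\<forall>a b. {a, b} \<in> snd G \<longrightarrow> length b = Suc (length a) \<or> length a = Suc (length b))"

lemma levelled_walk_last_length:
  assumes "levelled G" "walk G xs" "x \<in> set xs"
  shows "length (last xs) \<le> length x + (length xs - 1)"
  using assms(2,3)
proof (induction xs arbitrary: x rule: induct_list012)
  case (3 y z zs)
  have "length (last (z # zs)) \<le> length z + length zs"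
    using "3.IH"(2)[of z] "3.prems"(1) by simp
  moreover have "length z \<le> Suc (length y)"
    using assms(1) "3.prems"(1) unfolding levelled_def by fastforce
  ultimately show ?case
    using "3.IH"(2)[of x] "3.prems" by auto
qed auto

lemma levelled_gdist_ge:
  assumes "levelled G"
  shows "enat (length b - length a) \<le> gdist G a b"
proof (rule gdist_greatest)
  fix xs assume "walk G xs" "hd xs = a" "last xs = b"
  moreover from this have "hd xs \<in> set xs"
    by (metis hd_in_set walk_def)
  ultimately show "enat (length b - length a) \<le> enat (length xs - 1)"
    using levelled_walk_last_length[OF assms] by fastforce
qed

definition sole_cut_edge :: "graph \<Rightarrow> label set \<Rightarrow> label \<Rightarrow> label \<Rightarrow> bool" where
  "sole_cut_edge G S u p \<longleftrightarrow> (\<forall>a b. {a, b} \<in> snd G \<longrightarrow> a \<in> S \<longrightarrow> b \<notin> S \<longrightarrow> a = u \<and> b = p)"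

lemma sole_cut_edge_neighbour:
  "sole_cut_edge G S u p \<Longrightarrow> u \<in> S \<Longrightarrow> {u, z} \<in> snd G \<Longrightarrow> z \<noteq> p \<Longrightarrow> z \<in> S"
  unfolding sole_cut_edge_def by blast

lemma sole_cut_edge_crossing:
  assumes cut: "sole_cut_edge G S u p" and "{a, b} \<in> snd G" "(a \<in> S) \<noteq> (b \<in> S)"
  shows "{a, b} = {u, p}"
proof (cases "a \<in> S")
  case True
  with assms show ?thesis
    unfolding sole_cut_edge_def by blast
next
  case False
  have "{b, a} \<in> snd G"
    using assms(2) by (simp add: insert_commute)
  with False assms(3) cut have "b = u \<and> a = p"
    unfolding sole_cut_edge_def by blast
  then show ?thesis by blast
qed

lemma walk_across_sole_cut_edge:
  assumes "walk G xs" "sole_cut_edge G S u p" "(hd xs \<in> S) \<noteq> (last xs \<in> S)"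
  shows "u \<in> set xs \<and> p \<in> set xs"
  using assms(1,3)
proof (induction xs rule: induct_list012)
  case (3 x y zs)
  show ?case
  proof (cases "(x \<in> S) = (y \<in> S)")
    case True
    with 3 show ?thesis by auto
  next
    case False
    have "{x, y} \<in> snd G"
      using "3.prems"(1) by simp
    with assms(2) False have "{x, y} = {u, p}"
      using sole_cut_edge_crossing by blast
    then show ?thesis by auto
  qed
qed (auto simp: walk_def)

lemma tI_length: "a \<in> tI xi de G m \<Longrightarrow> length a = Suc m"
  by (simp add: tI_def lvl_def ulam_def)

lemma finite_tG: "finite (fst G) \<Longrightarrow> finite (fst (tG xi de G m))"
proof -
  assume fin: "finite (fst G)"
  have "{v @ [i] | v i. v \<in> lvl G m \<and> i \<in> Cset xi de G v}
      \<subseteq> (\<Union>v\<in>fst G. (\<lambda>i. v @ [i]) ` {..xi v})"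
    by (auto simp: lvl_def Cset_def)
  moreover have "finite (\<Union>v\<in>fst G. (\<lambda>i. v @ [i]) ` {..xi v})"
    using fin by simp
  ultimately show ?thesis
    unfolding tG_def using fin by (simp add: finite_subset)
qed

lemma finite_tI: "finite (fst G) \<Longrightarrow> finite (tI xi de G m)"
  unfolding tI_def lvl_def by (rule finite_subset[OF _ finite_tG]) auto

lemma tI_eq:
  assumes "\<forall>x\<in>fst G. length x \<le> m"
  shows "tI xi de G m = {v @ [i] | v i. v \<in> lvl G m \<and> i \<in> Cset xi de G v}"
proof (intro equalityI subsetI)
  fix a assume "a \<in> tI xi de G m"
  then have "a \<in> fst (tG xi de G m)" "length a = Suc m"
    by (auto simp: tI_def lvl_def ulam_def)
  with assms show "a \<in> {v @ [i] | v i. v \<in> lvl G m \<and> i \<in> Cset xi de G v}"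
    unfolding tG_def by force
next
  fix a assume "a \<in> {v @ [i] | v i. v \<in> lvl G m \<and> i \<in> Cset xi de G v}"
  then show "a \<in> tI xi de G m"
    unfolding tI_def lvl_def tG_def by (auto simp: ulam_def Cset_def)
qed

lemma levelled_tG: "levelled G \<Longrightarrow> levelled (tG xi de G m)"
  unfolding levelled_def tG_def by (auto simp: doubleton_eq_iff)

lemma prefix_snoc_iff: "length u \<le> length v \<Longrightarrow> prefix u (v @ [i]) \<longleftrightarrow> prefix u v"
  by auto

lemma sole_cut_edge_tG:
  assumes cut: "sole_cut_edge G {x. prefix u x} u p" and "length u \<le> m"
  shows "sole_cut_edge (tG xi de G m) {x. prefix u x} u p"
  unfolding sole_cut_edge_def
proof (intro allI impI)
  fix a b
  assume e: "{a, b} \<in> snd (tG xi de G m)" and side: "a \<in> {x. prefix u x}" "b \<notin> {x. prefix u x}"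
  from e consider "{a, b} \<in> snd G" | v i where "v \<in> lvl G m" "{a, b} = {v, v @ [i]}"
    unfolding tG_def by auto
  then show "a = u \<and> b = p"
  proof cases
    case 1
    with cut side show ?thesis
      unfolding sole_cut_edge_def by blast
  next
    case 2
    then have "prefix u (v @ [i]) \<longleftrightarrow> prefix u v"
      using assms(2) by (intro prefix_snoc_iff) (simp add: lvl_def ulam_def)
    with 2 side show ?thesis
      by (auto simp: doubleton_eq_iff)
  qed
qed

lemma simrel_piF:
  assumes "finite (fst G)" "a \<in> tI xi de G m"
  shows "simrel xi de mu G m a (piF xi de mu G m a)"
proof -
  let ?B = "{b. simrel xi de mu G m a b}"
  have "?B \<subseteq> tI xi de G m"
    by (auto simp: simrel_def)
  then have "finite ?B"
    using finite_tI[OF assms(1)] finite_subset by blast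
  moreover have "a \<in> ?B"
    using assms(2) by (simp add: simrel_def)
  ultimately show ?thesis
    unfolding piF_def using Min_in by blast
qed

locale realization =
  fixes xi :: "label \<Rightarrow> nat" and de :: "label \<Rightarrow> label \<Rightarrow> bool" and mu :: "label set \<Rightarrow> bool"
begin

abbreviation G :: "nat \<Rightarrow> graph" where "G \<equiv> GG xi de mu"
abbreviation I :: "nat \<Rightarrow> label set" where "I \<equiv> In xi de mu"

lemma In_length: "x \<in> I n \<Longrightarrow> length x = n"
  and In_vertex: "x \<in> I n \<Longrightarrow> x \<in> fst (G n)"
  by (simp_all add: In_def lvl_def ulam_def)

lemma GG_invariant: "finite (fst (G m)) \<and> (\<forall>x\<in>fst (G m). length x \<le> m \<and> x \<in> I (length x))"
proof (induction m)
  case 0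
  show ?case by (simp add: In_def lvl_def ulam_def)
next
  case (Suc m)
  have new: "length x = Suc m \<and> x \<in> I (Suc m)"
    if "x \<in> piF xi de mu (G m) m ` tI xi de (G m) m" for x
  proof -
    from that obtain a where "a \<in> tI xi de (G m) m" "x = piF xi de mu (G m) m a"
      by blast
    then have "x \<in> tI xi de (G m) m"
      using simrel_piF[of "G m" a] Suc.IH by (simp add: simrel_def)
    moreover have "x \<in> fst (G (Suc m))"
      using that by (simp add: step_def)
    ultimately show ?thesis
      by (simp add: tI_def In_def lvl_def ulam_def)
  qed
  have "finite (fst (G (Suc m)))"
    using Suc.IH finite_tI by (simp add: step_def)
  with new Suc.IH show ?case
    by (auto simp: step_def)
qed

lemma GG_finite: "finite (fst (G m))"
  and GG_length_le: "x \<in> fst (G m) \<Longrightarrow> length x \<le> m"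
  and GG_In_length: "x \<in> fst (G m) \<Longrightarrow> x \<in> I (length x)"
  using GG_invariant by blast+

lemma tI_GG: "tI xi de (G m) m = {v @ [i] | v i. v \<in> I m \<and> i \<in> Cset xi de (G m) v}"
  using tI_eq[of "G m" m] GG_length_le by (simp add: In_def)

lemma piF_in_tI: "a \<in> tI xi de (G m) m \<Longrightarrow> piF xi de mu (G m) m a \<in> tI xi de (G m) m"
  using simrel_piF[OF GG_finite] by (simp add: simrel_def)

lemma GG_edge:
  "{a, b} \<in> snd (G m) \<Longrightarrow>
     a \<in> fst (G m) \<and> b \<in> fst (G m) \<and> (length b = Suc (length a) \<or> length a = Suc (length b))"
proof (induction m arbitrary: a b)
  case (Suc m)
  let ?c = "\<lambda>v i. piF xi de mu (G m) m (v @ [i])"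
  from Suc.prems consider "{a, b} \<in> snd (G m)"
    | v i where "v \<in> I m" "i \<in> Cset xi de (G m) v" "{a, b} = {v, ?c v i}"
    by (auto simp: step_def In_def)
  then show ?case
  proof cases
    case 1
    with Suc.IH show ?thesis by (auto simp: step_def)
  next
    case 2
    then have "v @ [i] \<in> tI xi de (G m) m"
      by (auto simp: tI_GG)
    then have "length (?c v i) = Suc m" "?c v i \<in> fst (G (Suc m))"
      using tI_length[OF piF_in_tI] by (auto simp: step_def)
    moreover have "length v = m" "v \<in> fst (G (Suc m))"
      using 2(1) by (auto simp: In_length In_vertex step_def)
    ultimately show ?thesis
      using 2(3) by (auto simp: doubleton_eq_iff)
  qed
qed simp

lemma levelled_GG: "levelled (G m)"
  using GG_edge unfolding levelled_def by blast

lemma GG_parent: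
  "x \<in> fst (G m) \<Longrightarrow> x \<noteq> [] \<Longrightarrow> \<exists>y\<in>fst (G m). {y, x} \<in> snd (G m) \<and> Suc (length y) = length x"
proof (induction m)
  case (Suc m)
  show ?case
  proof (cases "x \<in> fst (G m)")
    case True
    with Suc show ?thesis by (auto simp: step_def)
  next
    case False
    with Suc.prems obtain a where a: "a \<in> tI xi de (G m) m" "x = piF xi de mu (G m) m a"
      by (auto simp: step_def)
    then obtain v i where v: "a = v @ [i]" "v \<in> I m" "i \<in> Cset xi de (G m) v"
      by (auto simp: tI_GG)
    have "length x = Suc m"
      using a piF_in_tI tI_length by blast
    moreover have "{v, x} \<in> snd (G (Suc m))"
      using a v by (auto simp: step_def In_def)
    moreover have "v \<in> fst (G (Suc m))" "length v = m"
      using v(2) by (auto simp: In_length In_vertex step_def)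
    ultimately show ?thesis by auto
  qed
qed simp

lemma mem_alpha:
  "x \<in> alpha xi de mu n w \<longleftrightarrow>
     length x \<le> n \<and> x \<in> I (length x) \<and> gdist (G n) x w = enat (n - length x)"
proof
  assume "x \<in> alpha xi de mu n w"
  then obtain j where "j \<le> n" "x \<in> I (n - j)" "gdist (G n) x w = enat j"
    by (auto simp: alpha_def)
  moreover from this have "length x = n - j"
    by (simp add: In_length)
  ultimately show "length x \<le> n \<and> x \<in> I (length x) \<and> gdist (G n) x w = enat (n - length x)"
    by auto
next
  assume "length x \<le> n \<and> x \<in> I (length x) \<and> gdist (G n) x w = enat (n - length x)"
  then show "x \<in> alpha xi de mu n w"
    unfolding alpha_def by (intro UN_I[of "n - length x"]) auto
qed

end

locale renewed_vertex = realization +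
  fixes k :: nat and u p :: label
  assumes renewed: "renewed xi de mu k u"
    and parent_edge: "{p, u} \<in> snd (G k)"
    and parent_length: "Suc (length p) = k"
begin

lemma k_ge_3: "3 \<le> k"
  and u_In: "u \<in> I k"
  using renewed unfolding renewed_def by blast+

lemma u_length: "length u = k"
  and u_vertex: "u \<in> fst (G k)"
  using u_In by (simp_all add: In_length In_vertex)

lemma p_vertex: "p \<in> fst (G k)"
  using GG_edge[OF parent_edge] by blast

lemma renewed_walk_end:
  assumes "walk (G k) (u # xs)" "length xs \<le> 3" "last (u # xs) \<noteq> u"
  shows "last (u # xs) = p \<or> length (last (u # xs)) + 2 \<le> k"
proof -
  let ?B = "{w \<in> Vn xi de mu k. 1 \<le> gdist (G k) u w \<and> gdist (G k) u w \<le> 3}"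
  have in_B: "last (u # ys) \<in> ?B"
    if "walk (G k) (u # ys)" "length ys \<le> 3" "last (u # ys) \<noteq> u" for ys
  proof -
    have "gdist (G k) u (last (u # ys)) \<le> enat (length ys)"
      using gdist_le_walk[OF that(1)] by simp
    also have "\<dots> \<le> 3"
      using that(2) by (simp add: numeral_eq_enat)
    finally show ?thesis
      using that(1,3) gdist_ge_1 by (auto simp: Vn_def walk_def)
  qed
  obtain p2 where p2: "p2 \<in> fst (G k)" "{p2, p} \<in> snd (G k)" "Suc (length p2) = length p"
    using GG_parent[OF p_vertex] parent_length k_ge_3 by force
  obtain p3 where p3: "p3 \<in> fst (G k)" "{p3, p2} \<in> snd (G k)" "Suc (length p3) = length p2"
    using GG_parent[OF p2(1)] p2(3) parent_length k_ge_3 by force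
  have "walk (G k) [u, p]" "walk (G k) [u, p, p2]" "walk (G k) [u, p, p2, p3]"
    using u_vertex p_vertex p2 p3 parent_edge by (simp_all add: insert_commute)
  moreover have "p \<noteq> u" "p2 \<noteq> u" "p3 \<noteq> u"
    using u_length p2(3) p3(3) parent_length by auto
  ultimately have "{p, p2, p3} \<subseteq> ?B"
    using in_B[of "[p]"] in_B[of "[p, p2]"] in_B[of "[p, p2, p3]"] by simp
  moreover have "card ?B = 3"
    using renewed by (simp add: renewed_def)
  moreover from this have "finite ?B"
    by (metis card.infinite zero_neq_numeral)
  moreover have "p \<noteq> p2" "p \<noteq> p3" "p2 \<noteq> p3"
    using p2(3) p3(3) by auto
  then have "card {p, p2, p3} = 3"
    by simp
  ultimately have "?B = {p, p2, p3}"
    by (metis card_subset_eq)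
  then show ?thesis
    using in_B[OF assms] p2(3) p3(3) parent_length by auto
qed

lemma renewed_neighbour_eq_parent:
  assumes "{u, y} \<in> snd (G k)"
  shows "y = p"
proof -
  have y: "y \<in> fst (G k)" "length y = Suc k \<or> k = Suc (length y)"
    using GG_edge[OF assms] u_length by auto
  then have len_y: "Suc (length y) = k"
    using GG_length_le by fastforce
  have "walk (G k) [u, y]"
    using assms u_vertex y(1) by simp
  moreover have "y \<noteq> u"
    using len_y u_length by auto
  ultimately have "y = p \<or> length y + 2 \<le> k"
    using renewed_walk_end[of "[y]"] by simp
  with len_y show ?thesis
    by auto
qed

lemma parent_neighbour_eq_renewed:
  assumes "{c, p} \<in> snd (G k)" "length c = k"
  shows "c = u"
proof (rule ccontr)
  assume "c \<noteq> u"
  moreover have "walk (G k) [u, p, c]"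
    using assms(1) GG_edge[OF assms(1)] u_vertex parent_edge by (simp add: insert_commute)
  ultimately have "c = p \<or> length c + 2 \<le> k"
    using renewed_walk_end[of "[p, c]"] by simp
  with assms(2) parent_length show False
    by auto
qed

lemma sole_cut_edge_base: "sole_cut_edge (G k) {x. prefix u x} u p"
  unfolding sole_cut_edge_def
proof (intro allI impI)
  fix a b
  assume e: "{a, b} \<in> snd (G k)" and "a \<in> {x. prefix u x}"
  moreover have "length a \<le> length u"
    using GG_edge[OF e] GG_length_le u_length by blast
  ultimately have a_eq: "a = u"
    by (auto simp: prefix_def)
  with e have "{u, b} \<in> snd (G k)"
    by simp
  then have "b = p"
    by (rule renewed_neighbour_eq_parent)
  with a_eq show "a = u \<and> b = p" ..
qed

lemma tG_parent_neighbour_eq_renewed: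
  assumes "{c, p} \<in> snd (tG xi de (G k) k)" "length c = k"
  shows "c = u"
proof -
  from assms(1) consider "{c, p} \<in> snd (G k)" | v i where "v \<in> lvl (G k) k" "{c, p} = {v, v @ [i]}"
    unfolding tG_def by auto
  then show ?thesis
  proof cases
    case 1
    then show ?thesis
      using assms(2) by (rule parent_neighbour_eq_renewed)
  next
    case 2
    then have "length (v @ [i]) = Suc k"
      by (simp add: lvl_def ulam_def)
    then have "p \<noteq> v @ [i]" "c \<noteq> v @ [i]"
      using assms(2) parent_length by auto
    with 2(2) show ?thesis
      by (auto simp: doubleton_eq_iff)
  qed
qed

lemma tG_walk_through_parent:
  assumes "k \<le> m" "walk (tG xi de (G m) m) [x, a, q, b, y]"
    and "length x = Suc m" "length y = Suc m" "p \<in> {x, a, q, b, y}"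
  shows "a = u \<and> b = u"
proof -
  let ?T = "tG xi de (G m) m"
  have edges: "{x, a} \<in> snd ?T" "{a, q} \<in> snd ?T" "{q, b} \<in> snd ?T" "{b, y} \<in> snd ?T"
    using assms(2) by simp_all
  have adj: "length b' = Suc (length a') \<or> length a' = Suc (length b')"
    if "{a', b'} \<in> snd ?T" for a' b'
    using that levelled_tG[OF levelled_GG] unfolding levelled_def by blast
  note lengths = adj[OF edges(1)] adj[OF edges(2)] adj[OF edges(3)] adj[OF edges(4)]
    assms(1,3,4) parent_length
  text \<open>The ends lie on level m + 1 \<ge> k + 1 and p on level k - 1, so p can only be the
    middle vertex, which forces m = k and puts a and b on level k.\<close>
  have "length x \<noteq> length p" "length a \<noteq> length p" "length b \<noteq> length p" "length y \<noteq> length p"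
    using lengths by arith+
  with assms(5) have "q = p"
    by auto
  then have "Suc (length q) = k"
    using parent_length by simp
  with lengths have "m = k" "length a = k" "length b = k"
    by arith+
  moreover have "{a, p} \<in> snd ?T" "{b, p} \<in> snd ?T"
    using edges(2,3) \<open>q = p\<close> by (simp_all add: insert_commute)
  ultimately show ?thesis
    using tG_parent_neighbour_eq_renewed by blast
qed

lemma msim_same_side:
  assumes "k \<le> m" and cut: "sole_cut_edge (G m) {x. prefix u x} u p"
    and "msim xi de mu (G m) m x y"
  shows "prefix u x \<longleftrightarrow> prefix u y"
proof (rule ccontr)
  let ?T = "tG xi de (G m) m"
  assume side: "\<not> (prefix u x \<longleftrightarrow> prefix u y)"
  have "x \<in> tI xi de (G m) m" "y \<in> tI xi de (G m) m" "gdist ?T x y = 4"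
    using assms(3) by (simp_all add: msim_def)
  then have lens: "length x = Suc m" "length y = Suc m" and "gdist ?T x y = enat 4"
    by (simp_all add: tI_length enat_numeral)
  then obtain xs where xs: "walk ?T xs" "hd xs = x" "last xs = y" "length xs = 5"
    by (auto elim: gdist_obtains_walk)
  then obtain a q b where xs_eq: "xs = [x, a, q, b, y]"
    by (auto simp: numeral_eq_Suc length_Suc_conv)
  from xs(1) have walk: "walk ?T [x, a, q, b, y]"
    unfolding xs_eq .
  have cutT: "sole_cut_edge ?T {x. prefix u x} u p"
    using sole_cut_edge_tG[OF cut] assms(1) u_length by simp
  have "p \<in> {x, a, q, b, y}"
    using walk_across_sole_cut_edge[OF xs(1) cutT] side xs(2,3) xs_eq by auto
  with tG_walk_through_parent[OF assms(1) walk lens] have "a = u \<and> b = u" .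
  with walk have "{u, x} \<in> snd ?T" "{u, y} \<in> snd ?T"
    by (simp_all add: insert_commute)
  moreover have "x \<noteq> p" "y \<noteq> p"
    using lens parent_length assms(1) by auto
  ultimately have "prefix u x" "prefix u y"
    using sole_cut_edge_neighbour[OF cutT] by auto
  with side show False
    by simp
qed

lemma simrel_same_side:
  assumes "k \<le> m" "sole_cut_edge (G m) {x. prefix u x} u p" "simrel xi de mu (G m) m a b"
  shows "prefix u a \<longleftrightarrow> prefix u b"
proof -
  have "(\<lambda>x y. msim xi de mu (G m) m x y \<or> msim xi de mu (G m) m y x)\<^sup>*\<^sup>* a b"
    using assms(3) by (simp add: simrel_def)
  then show ?thesis
  proof (induction rule: rtranclp_induct)
    case (step y z)
    with msim_same_side[OF assms(1,2)] show ?case by blast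
  qed simp
qed

lemma sole_cut_edge_GG: "k \<le> m \<Longrightarrow> sole_cut_edge (G m) {x. prefix u x} u p"
proof (induction m rule: dec_induct)
  case base
  show ?case by (rule sole_cut_edge_base)
next
  case (step m)
  show ?case
    unfolding sole_cut_edge_def
  proof (intro allI impI)
    let ?c = "\<lambda>v i. piF xi de mu (G m) m (v @ [i])"
    fix a b
    assume e: "{a, b} \<in> snd (G (Suc m))" and side: "a \<in> {x. prefix u x}" "b \<notin> {x. prefix u x}"
    from e consider "{a, b} \<in> snd (G m)"
      | v i where "v \<in> I m" "i \<in> Cset xi de (G m) v" "{a, b} = {v, ?c v i}"
      by (auto simp: step_def In_def)
    then show "a = u \<and> b = p"
    proof cases
      case 1
      with step.IH side show ?thesis
        unfolding sole_cut_edge_def by blast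
    next
      case 2
      then have "v @ [i] \<in> tI xi de (G m) m"
        by (auto simp: tI_GG)
      then have "prefix u (v @ [i]) \<longleftrightarrow> prefix u (?c v i)"
        using simrel_same_side[OF step.hyps(1) step.IH] simrel_piF[OF GG_finite] by blast
      moreover have "prefix u (v @ [i]) \<longleftrightarrow> prefix u v"
        using 2(1) step.hyps(1) u_length by (intro prefix_snoc_iff) (simp add: In_length)
      ultimately show ?thesis
        using 2(3) side by (auto simp: doubleton_eq_iff)
    qed
  qed
qed

lemma short_walk_same_side:
  assumes "k \<le> m" "walk (G m) xs" "length (last xs) = k + n" "length xs \<le> Suc n"
  shows "prefix u (hd xs) \<longleftrightarrow> prefix u (last xs)"
proof (rule ccontr)
  assume "\<not> ?thesis"
  then have "p \<in> set xs"
    using walk_across_sole_cut_edge[OF assms(2) sole_cut_edge_GG[OF assms(1)]] by auto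
  then have "length (last xs) \<le> length p + (length xs - 1)"
    using levelled_walk_last_length[OF levelled_GG assms(2)] by blast
  with assms(3,4) parent_length show False
    by simp
qed

lemma walk_to_descendant:
  assumes "k \<le> m"
  shows "x \<in> fst (G m) \<Longrightarrow> prefix u x \<Longrightarrow> length x = k + j \<Longrightarrow>
    \<exists>xs. walk (G m) xs \<and> hd xs = u \<and> last xs = x \<and> length xs = Suc j"
proof (induction j arbitrary: x)
  case 0
  then have "x = u"
    using u_length by (auto simp: prefix_def)
  with "0.prems"(1) show ?case
    by (intro exI[of _ "[x]"]) simp
next
  case (Suc j)
  obtain y where y: "y \<in> fst (G m)" "{y, x} \<in> snd (G m)" "Suc (length y) = length x"
    using GG_parent[OF Suc.prems(1)] Suc.prems(3) by force
  have "prefix u y"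
  proof (rule ccontr)
    assume "\<not> prefix u y"
    moreover have "{x, y} \<in> snd (G m)"
      using y(2) by (simp add: insert_commute)
    ultimately have "x = u"
      using sole_cut_edge_GG[OF assms] Suc.prems(2) unfolding sole_cut_edge_def by blast
    with Suc.prems(3) u_length show False
      by simp
  qed
  with Suc.IH y Suc.prems(3) obtain ys where
    ys: "walk (G m) ys" "hd ys = u" "last ys = y" "length ys = Suc j"
    by auto
  then have "walk (G m) (ys @ [x])"
    using walk_snoc y(2) Suc.prems(1) by blast
  with ys show ?case
    by (intro exI[of _ "ys @ [x]"]) (auto simp: hd_append)
qed

lemma gdist_renewed_eq_iff:
  assumes "k \<le> m" "v \<in> fst (G m)" "length v = k + n"
  shows "gdist (G m) u v = enat n \<longleftrightarrow> prefix u v"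
proof
  assume "gdist (G m) u v = enat n"
  then obtain xs where "walk (G m) xs" "hd xs = u" "last xs = v" "length xs = Suc n"
    by (rule gdist_obtains_walk)
  with short_walk_same_side[OF assms(1)] assms(3) show "prefix u v"
    by fastforce
next
  assume "prefix u v"
  then obtain xs where "walk (G m) xs" "hd xs = u" "last xs = v" "length xs = Suc n"
    using walk_to_descendant[OF assms(1,2)] assms(3) by blast
  then have "gdist (G m) u v \<le> enat n"
    using gdist_le_walk by fastforce
  moreover have "enat n \<le> gdist (G m) u v"
    using levelled_gdist_ge[OF levelled_GG, where a = u and b = v] assms(3) u_length by simp
  ultimately show "gdist (G m) u v = enat n"
    by simp
qed

lemma Iu_eq: "Iu xi de mu k u n = {v \<in> I (k + n). prefix u v}"
proof -
  have "u \<in> alpha xi de mu (k + n) v \<longleftrightarrow> prefix u v" if "v \<in> I (k + n)" for v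
    using that mem_alpha[of u "k + n" v] gdist_renewed_eq_iff[of "k + n" v n] u_In u_length
    by (simp add: In_length In_vertex)
  then show ?thesis
    unfolding Iu_def by blast
qed

lemma sigma_subset_tIu:
  assumes "1 \<le> n" "v \<in> Iu xi de mu k u n"
  shows "sigma xi de mu (k + n) v \<subseteq> tIu xi de mu k u n"
proof
  define m where "m = k + (n - 1)"
  have m: "k + n - 1 = m" "k \<le> m"
    using assms(1) by (simp_all add: m_def)
  fix vt assume vt: "vt \<in> sigma xi de mu (k + n) v"
  then have "vt \<in> tI xi de (G m) m" "simrel xi de mu (G m) m vt v"
    unfolding sigma_def tildeI_def simn_def m by auto
  then obtain w i where w: "vt = w @ [i]" "w \<in> I m"
    by (auto simp: tI_GG)
  have "prefix u vt"
    using simrel_same_side[OF m(2) sole_cut_edge_GG[OF m(2)] \<open>simrel _ _ _ _ _ vt v\<close>] assms(2)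
    by (simp add: Iu_eq)
  then have "prefix u w"
    using w m(2) u_length In_length[OF w(2)] by auto
  with w(2) have "w \<in> Iu xi de mu k u (n - 1)"
    by (simp add: Iu_eq m_def)
  with vt w(1) show "vt \<in> tIu xi de mu k u n"
    unfolding tIu_def sigma_def by blast
qed

lemma alpha_i_subset_Iu:
  assumes "v \<in> Iu xi de mu k u n" "i \<le> n"
  shows "alpha_i xi de mu (k + n) i v \<subseteq> Iu xi de mu k u (n - i)"
proof
  fix x assume "x \<in> alpha_i xi de mu (k + n) i v"
  then have "x \<in> alpha xi de mu (k + n) v" "x \<in> I (k + n - i)"
    by (simp_all add: alpha_i_def)
  moreover from this have "length x = k + n - i"
    by (simp add: In_length)
  ultimately have x: "x \<in> I (k + (n - i))" "gdist (G (k + n)) x v = enat i"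
    using assms(2) by (simp_all add: mem_alpha)
  then obtain xs where xs: "walk (G (k + n)) xs" "hd xs = x" "last xs = v" "length xs = Suc i"
    by (blast elim: gdist_obtains_walk)
  have "prefix u v" "length v = k + n"
    using assms(1) by (simp_all add: Iu_eq In_length)
  then have "prefix u x"
    using short_walk_same_side[OF _ xs(1), of n] xs(2-4) assms(2) by simp
  with x(1) show "x \<in> Iu xi de mu k u (n - i)"
    by (simp add: Iu_eq)
qed

lemma Iu_subset_Uu: "Iu xi de mu k u n \<subseteq> Uu u n"
proof
  fix v assume "v \<in> Iu xi de mu k u n"
  then obtain w where "v = u @ w" "v \<in> ulam (k + n)"
    by (auto simp: Iu_eq In_def lvl_def prefix_def)
  then have "w \<in> ulam n"
    using u_length by (simp add: ulam_def)
  with \<open>v = u @ w\<close> show "v \<in> Uu u n"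
    by (auto simp: Uu_def)
qed

lemma walk_leaving_Vu_visits_renewed:
  assumes "k \<le> m" "v \<in> Vu xi de mu k u (m - k)" "v' \<in> Vn xi de mu m - Vu xi de mu k u (m - k)"
    "walk (G m) xs" "hd xs = v" "last xs = v'"
  shows "u \<in> set xs"
proof -
  have "prefix u v"
    using assms(2) by (auto simp: Vu_def Iu_eq)
  moreover have "\<not> prefix u v'"
  proof
    assume "prefix u v'"
    have "v' \<in> fst (G m)"
      using assms(3) by (simp add: Vn_def)
    then have "v' \<in> I (length v')" "length v' \<le> m"
      by (simp_all add: GG_In_length GG_length_le)
    moreover have "k \<le> length v'"
      using prefix_length_le[OF \<open>prefix u v'\<close>] u_length by simp
    ultimately have "v' \<in> Iu xi de mu k u (length v' - k)" "length v' - k \<le> m - k"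
      using \<open>prefix u v'\<close> by (simp_all add: Iu_eq)
    with assms(3) show False
      unfolding Vu_def by auto
  qed
  ultimately show ?thesis
    using walk_across_sole_cut_edge[OF assms(4) sole_cut_edge_GG[OF assms(1)]] assms(5,6) by auto
qed

end

theorem lemma4p1:
  fixes xi :: "label \<Rightarrow> nat" and de :: "label \<Rightarrow> label \<Rightarrow> bool" and mu :: "label set \<Rightarrow> bool"
    and k :: nat and u :: label
  assumes "k \<ge> 3" and "u \<in> In xi de mu k" and "renewed xi de mu k u"
  shows "(\<forall>n\<ge>1. \<forall>v\<in>Iu xi de mu k u n.
            sigma xi de mu (k + n) v \<subseteq> tIu xi de mu k u n \<and>
            (\<forall>i\<le>n. alpha_i xi de mu (k + n) i v \<subseteq> Iu xi de mu k u (n - i)))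
       \<and> (\<forall>n. Iu xi de mu k u n \<subseteq> Uu u n)
       \<and> (\<forall>m\<ge>k. \<forall>v\<in>Vu xi de mu k u (m - k). \<forall>v'\<in>Vn xi de mu m - Vu xi de mu k u (m - k).
            \<forall>xs. gpath (GG xi de mu m) xs \<and> hd xs = v \<and> last xs = v' \<longrightarrow> u \<in> set xs)"
proof -
  have "u \<in> fst (GG xi de mu k)" "length u = k"
    using assms(2) by (simp_all add: In_def lvl_def ulam_def)
  moreover from this have "u \<noteq> []"
    using assms(1) by auto
  ultimately obtain p where "{p, u} \<in> snd (GG xi de mu k)" "Suc (length p) = k"
    using realization.GG_parent by metis
  then interpret renewed_vertex xi de mu k u p
    using assms(3) by unfold_locales
  show ?thesis
    unfolding gpath_def
    using sigma_subset_tIu alpha_i_subset_Iu Iu_subset_Uu walk_leaving_Vu_visits_renewed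
    by blast
qed

end
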